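(* Let $n\in\mathbb{Z}^+$ and let $P_n$ denote the $n$-th Pell number, defined by $P_0=0$, $P_1=1$ and $P_n=2P_{n-1}+P_{n-2}$ for $n>1$. Then $$P_n = \left((3^n+1)^{n-1}\bmod (9^n-2)\right)\bmod (3^n-1).$$
   Context: For integers, $u\bmod m$ denotes the least non-negative remainder of $u$ upon division by $m>0$. *)

theory Defs
  imports Main
begin

fun pell :: "nat \<Rightarrow> nat" where
  "pell 0 = 0"
| "pell (Suc 0) = 1"
| "pell (Suc (Suc n)) = 2 * pell (Suc n) + pell n"

end

theory Submission
  imports Defs "HOL-Number_Theory.Cong"
begin

text \<open>Writing \<open>(1 + \<surd>2)\<^sup>m = H m + P m \<surd>2\<close> with the half-companion Pell numbers \<open>H\<close>, one has
  \<open>H m + P m = P (m + 1)\<close>. Put \<open>x = 3\<^sup>n\<close> and \<open>m = n - 1\<close>. Since \<open>x\<^sup>2 \<equiv> 2\<close> modulo \<open>9\<^sup>n - 2 = x\<^sup>2 - 2\<close>,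
  the same expansion gives \<open>(x + 1)\<^sup>m \<equiv> H m + P m x\<close>. Both coefficients are at most
  \<open>P (m + 1) \<le> 3\<^sup>m = x / 3\<close>, so \<open>H m + P m x\<close> is the exact remainder, and reducing it modulo \<open>x - 1\<close>
  turns \<open>x\<close> into \<open>1\<close>, leaving \<open>H m + P m = P n\<close>.\<close>

fun half_companion_pell :: "nat \<Rightarrow> nat" where
  "half_companion_pell 0 = 1"
| "half_companion_pell (Suc m) = half_companion_pell m + 2 * pell m"

lemma pell_Suc_eq: "pell (Suc m) = half_companion_pell m + pell m"
  by (induction m rule: pell.induct) simp_all

lemma pell_Suc_le_power: "pell (Suc m) \<le> 3 ^ m"
proof (induction m)
  case 0
  show ?case by simp
next
  case (Suc m)
  then show ?case
    unfolding pell_Suc_eq[of "Suc m"] pell_Suc_eq[of m] by simp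
qed

lemma power_Suc_cong_pell:
  fixes x M :: nat
  assumes "[x\<^sup>2 = 2] (mod M)"
  shows "[(x + 1) ^ m = half_companion_pell m + pell m * x] (mod M)"
proof (induction m)
  case 0
  show ?case by simp
next
  case (Suc m)
  let ?h = "half_companion_pell m" and ?p = "pell m"
  have "[(x + 1) ^ Suc m = (?h + ?p * x) * (x + 1)] (mod M)"
    unfolding power_Suc2 by (rule cong_mult[OF Suc.IH cong_refl])
  also have "(?h + ?p * x) * (x + 1) = ?h + (?h + ?p) * x + ?p * x\<^sup>2"
    by (simp add: algebra_simps power2_eq_square)
  also have "[?h + (?h + ?p) * x + ?p * x\<^sup>2 = ?h + (?h + ?p) * x + ?p * 2] (mod M)"
    using assms by (intro cong_add cong_mult) simp_all
  also have "?h + (?h + ?p) * x + ?p * 2 = half_companion_pell (Suc m) + pell (Suc m) * x"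
    by (simp add: pell_Suc_eq)
  finally show ?case .
qed

lemma cong_square_diff: "2 \<le> (x::nat)\<^sup>2 \<Longrightarrow> [x\<^sup>2 = 2] (mod x\<^sup>2 - 2)"
  by (simp add: cong_def le_mod_geq)

lemma mod_mod_eq_digit_sum:
  fixes y a p x M :: nat
  assumes "[y = a + p * x] (mod M)" and "a + p * x < M" and "a + p < x - 1"
  shows "y mod M mod (x - 1) = a + p"
proof -
  have "y mod M = a + p * x"
    using assms(1,2) by (simp add: cong_def)
  moreover have "[a + p * x = a + p * 1] (mod x - 1)"
    using assms(3) by (intro cong_add cong_mult) (simp_all add: cong_def le_mod_geq)
  ultimately show ?thesis
    using assms(3) by (simp add: cong_def)
qed

lemma digit_sum_lt_square_diff:
  fixes a p t :: nat
  assumes "a + p \<le> t" and "1 \<le> t"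
  shows "a + p * (3 * t) < (3 * t)\<^sup>2 - 2"
proof -
  have "a + p * (3 * t) \<le> (a + p) * (3 * t)"
    using assms(2) by (simp add: distrib_right)
  also have "\<dots> \<le> t * (3 * t)"
    using assms(1) by (rule mult_right_mono) simp
  also have "\<dots> < (3 * t)\<^sup>2 - 2"
  proof -
    have "1 \<le> t * t"
      using assms(2) by simp
    moreover have "t * (3 * t) = 3 * (t * t)" "(3 * t)\<^sup>2 = 9 * (t * t)"
      by (simp_all add: power2_eq_square)
    ultimately show ?thesis
      by linarith
  qed
  finally show ?thesis .
qed

theorem theorem4p1:
  fixes n :: nat
  assumes "n \<ge> 1"
  shows "pell n = ((3 ^ n + 1) ^ (n - 1) mod (9 ^ n - 2)) mod (3 ^ n - 1)"
proof -
  obtain m where n: "n = Suc m" using assms by (cases n) auto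
  define t :: nat where "t = 3 ^ m"
  define x :: nat where "x = 3 * t"
  have "(9::nat) ^ m = t * t"
    by (simp add: t_def flip: power_mult_distrib)
  then have powers: "3 ^ n = x" "9 ^ n = x\<^sup>2"
    by (simp_all add: n x_def t_def power2_eq_square)
  have "1 \<le> t"
    by (simp add: t_def)
  have digits: "half_companion_pell m + pell m \<le> t"
    using pell_Suc_le_power[of m] by (simp add: pell_Suc_eq t_def)
  have "(x + 1) ^ m mod (x\<^sup>2 - 2) mod (x - 1) = half_companion_pell m + pell m"
  proof (intro mod_mod_eq_digit_sum power_Suc_cong_pell cong_square_diff)
    show "half_companion_pell m + pell m * x < x\<^sup>2 - 2"
      unfolding x_def using digits \<open>1 \<le> t\<close> by (rule digit_sum_lt_square_diff)
    then show "2 \<le> x\<^sup>2"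
      by linarith
    show "half_companion_pell m + pell m < x - 1"
      using digits \<open>1 \<le> t\<close> by (simp add: x_def)
  qed
  then show ?thesis
    unfolding powers by (simp add: n pell_Suc_eq)
qed

end
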